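(* Let $\mathbb{K}$ be a totally ordered field and $\kappa$ an uncountable cardinal. Then $\mathbb{K}$ is algebraically $\kappa$-saturated if and only if $\mathbb{K}$ is both Cantor $\kappa$-complete and algebraically $\kappa$-saturated at infinity.
   Context: $\mathbb{K}$ is algebraically $\kappa$-saturated if every family of fewer than $\kappa$ open intervals $(a_\gamma,b_\gamma)$ in $\mathbb{K}$ with the finite intersection property has non-empty intersection. $\mathbb{K}$ is algebraically $\kappa$-saturated at infinity if every subset of $\mathbb{K}$ of cardinality less than $\kappa$ is bounded. $\mathbb{K}$ is Cantor $\kappa$-complete if every family of fewer than $\kappa$ closed bounded intervals $[a_\gamma,b_\gamma]$ in $\mathbb{K}$ with the finite intersection property has non-empty intersection. *)

theory Defs
  imports Main
begin

text \<open>Cardinals are represented as cardinal orders (BNF_Cardinal_Order_Relation);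
  a set A has fewer than kappa elements iff card_of A <o kappa.
  A family of intervals is represented by the set of its endpoint pairs.\<close>

definition open_fip :: "('a::linorder \<times> 'a) set \<Rightarrow> bool" where
  "open_fip F \<longleftrightarrow> (\<forall>G \<subseteq> F. finite G \<longrightarrow> (\<exists>x. \<forall>(a,b)\<in>G. x \<in> {a<..<b}))"

definition closed_fip :: "('a::linorder \<times> 'a) set \<Rightarrow> bool" where
  "closed_fip F \<longleftrightarrow> (\<forall>G \<subseteq> F. finite G \<longrightarrow> (\<exists>x. \<forall>(a,b)\<in>G. x \<in> {a..b}))"

definition alg_saturated :: "'b rel \<Rightarrow> 'a::linordered_field itself \<Rightarrow> bool" where
  "alg_saturated \<kappa> _ \<longleftrightarrow>
     (\<forall>F :: ('a \<times> 'a) set. (card_of F, \<kappa>) \<in> ordLess \<longrightarrow> open_fip F \<longrightarrow>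
        (\<exists>x. \<forall>(a,b)\<in>F. x \<in> {a<..<b}))"

definition alg_saturated_at_infinity :: "'b rel \<Rightarrow> 'a::linordered_field itself \<Rightarrow> bool" where
  "alg_saturated_at_infinity \<kappa> _ \<longleftrightarrow>
     (\<forall>A :: 'a set. (card_of A, \<kappa>) \<in> ordLess \<longrightarrow> bdd_above A \<and> bdd_below A)"

definition cantor_complete :: "'b rel \<Rightarrow> 'a::linordered_field itself \<Rightarrow> bool" where
  "cantor_complete \<kappa> _ \<longleftrightarrow>
     (\<forall>F :: ('a \<times> 'a) set. (card_of F, \<kappa>) \<in> ordLess \<longrightarrow> closed_fip F \<longrightarrow>
        (\<exists>x. \<forall>(a,b)\<in>F. x \<in> {a..b}))"

end

theory Submission
  imports Defs
begin

(* The finite intersection property of a family of intervals in a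
   linear order is a purely pairwise condition (one-dimensional Helly theorem):
   closed intervals [a,b], [c,d] of the family must satisfy a \<le> d, open ones
   a < d (in a dense order).  With this reformulation:
   - saturation gives Cantor completeness: if some left endpoint is maximal it is
     a common point; otherwise the pairwise condition holds strictly, so the open
     intervals have the FIP and saturation yields a common point;
   - saturation gives saturation at infinity: a point of all (0, 1/(|a|+1)),
     a \<in> A, bounds A;
   - conversely, saturation at infinity makes the fewer-than-\<kappa> gaps d - a of an
     open family uniformly \<ge> e > 0; shrinking every interval by e/2 gives a closed
     family with the FIP, and a common point of it lies in all open intervals. *)

unbundle cardinal_syntax

lemma finite_card_less:
  assumes "natLeq <o \<kappa>" "finite A"
  shows "|A| <o \<kappa>"
proof -
  have "|A| <o natLeq"
    by (rule finite_ordLess_infinite[OF card_of_Well_order natLeq_Well_order])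
      (simp_all add: Field_natLeq Field_card_of assms(2))
  then show ?thesis using assms(1) by (rule ordLess_transitive)
qed

lemma Times_card_less:
  assumes "natLeq <o \<kappa>" "|A| <o \<kappa>"
  shows "|A \<times> A| <o \<kappa>"
proof (cases "finite A")
  case True
  then show ?thesis by (simp add: finite_card_less[OF assms(1)])
next
  case False
  then have "|A \<times> A| =o |A|" by (rule card_of_Times_same_infinite)
  then show ?thesis using assms(2) by (rule ordIso_ordLess_trans)
qed

lemma image_card_less:
  assumes "|A| <o \<kappa>"
  shows "|f ` A| <o \<kappa>"
  using card_of_image assms by (rule ordLeq_ordLess_trans)

lemma closed_fip_pair:
  assumes "closed_fip F" "(a, b) \<in> F" "(c, d) \<in> F"
  shows "a \<le> d"
proof -
  have "{(a, b), (c, d)} \<subseteq> F" using assms(2,3) by simp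
  then obtain x where "\<forall>(a', b')\<in>{(a, b), (c, d)}. x \<in> {a'..b'}"
    using assms(1) unfolding closed_fip_def by blast
  then show ?thesis by auto
qed

lemma open_fip_pair:
  assumes "open_fip F" "(a, b) \<in> F" "(c, d) \<in> F"
  shows "a < d"
proof -
  have "{(a, b), (c, d)} \<subseteq> F" using assms(2,3) by simp
  then obtain x where "\<forall>(a', b')\<in>{(a, b), (c, d)}. x \<in> {a'<..<b'}"
    using assms(1) unfolding open_fip_def by blast
  then show ?thesis by auto
qed

text \<open>One-dimensional Helly theorem for closed intervals: the largest left endpoint
  of a finite subfamily lies in all its intervals.\<close>
lemma closed_fip_iff_pairwise:
  fixes F :: "('a::linorder \<times> 'a) set"
  shows "closed_fip F \<longleftrightarrow> (\<forall>(a, b)\<in>F. \<forall>(c, d)\<in>F. a \<le> d)"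
proof
  assume "closed_fip F"
  then show "\<forall>(a, b)\<in>F. \<forall>(c, d)\<in>F. a \<le> d" by (auto intro: closed_fip_pair)
next
  assume pairwise: "\<forall>(a, b)\<in>F. \<forall>(c, d)\<in>F. a \<le> d"
  show "closed_fip F" unfolding closed_fip_def
  proof (intro allI impI)
    fix G assume G: "G \<subseteq> F" "finite G"
    show "\<exists>x. \<forall>(a, b)\<in>G. x \<in> {a..b}"
    proof (cases "G = {}")
      case False
      define m where "m = Max (fst ` G)"
      have "m \<in> fst ` G" unfolding m_def using G False by simp
      then obtain c d where cd: "(c, d) \<in> G" "m = c" by auto
      have "m \<in> {a..b}" if ab: "(a, b) \<in> G" for a b
      proof -
        have "a \<le> m" unfolding m_def using G ab by (force intro: Max_ge)
        moreover have "m \<le> b" using pairwise cd ab G by fastforce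
        ultimately show ?thesis by simp
      qed
      then show ?thesis by blast
    qed simp
  qed
qed

text \<open>The same for open intervals in a dense order: the largest left endpoint is
  below the smallest right endpoint, and any point strictly between them works.\<close>
lemma open_fip_iff_pairwise:
  fixes F :: "('a::dense_linorder \<times> 'a) set"
  shows "open_fip F \<longleftrightarrow> (\<forall>(a, b)\<in>F. \<forall>(c, d)\<in>F. a < d)"
proof
  assume "open_fip F"
  then show "\<forall>(a, b)\<in>F. \<forall>(c, d)\<in>F. a < d" by (auto intro: open_fip_pair)
next
  assume pairwise: "\<forall>(a, b)\<in>F. \<forall>(c, d)\<in>F. a < d"
  show "open_fip F" unfolding open_fip_def
  proof (intro allI impI)
    fix G assume G: "G \<subseteq> F" "finite G"
    show "\<exists>x. \<forall>(a, b)\<in>G. x \<in> {a<..<b}"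
    proof (cases "G = {}")
      case False
      define l where "l = Max (fst ` G)"
      define r where "r = Min (snd ` G)"
      have "l \<in> fst ` G" unfolding l_def using G False by simp
      then obtain a1 b1 where 1: "(a1, b1) \<in> G" "l = a1" by auto
      have "r \<in> snd ` G" unfolding r_def using G False by simp
      then obtain a2 b2 where 2: "(a2, b2) \<in> G" "r = b2" by auto
      have "l < r" using pairwise 1 2 G by fastforce
      then obtain x where x: "l < x" "x < r" using dense by blast
      have "x \<in> {a<..<b}" if ab: "(a, b) \<in> G" for a b
      proof -
        have "a \<le> l" unfolding l_def using G ab by (force intro: Max_ge)
        moreover have "r \<le> b" unfolding r_def using G ab by (force intro: Min_le)
        ultimately show ?thesis using x by (auto intro: le_less_trans less_le_trans)
      qed
      then show ?thesis by blast
    qed simp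
  qed
qed

text \<open>Saturation bounds every small set: a common point x of the intervals
  (0, 1/(|a|+1)) satisfies |a| < 1/x for all a.\<close>
lemma alg_saturated_at_infinity:
  assumes sat: "alg_saturated \<kappa> TYPE('a::linordered_field)"
  shows "alg_saturated_at_infinity \<kappa> TYPE('a)"
  unfolding alg_saturated_at_infinity_def
proof (intro allI impI)
  fix A :: "'a set" assume A: "|A| <o \<kappa>"
  define F where "F = (\<lambda>a. (0::'a, inverse (\<bar>a\<bar> + 1))) ` A"
  have "open_fip F"
    unfolding open_fip_iff_pairwise F_def by (auto simp: add_pos_nonneg)
  then obtain x where x: "\<forall>(a, b)\<in>F. x \<in> {a<..<b}"
    using sat image_card_less[OF A] unfolding alg_saturated_def F_def by blast
  have "\<bar>a\<bar> \<le> inverse x" if "a \<in> A" for a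
  proof -
    have "0 < x" "x < inverse (\<bar>a\<bar> + 1)" using x that unfolding F_def by auto
    then have "\<bar>a\<bar> + 1 < inverse x"
      by (metis inverse_inverse_eq less_imp_inverse_less)
    then show ?thesis by simp
  qed
  then show "bdd_above A \<and> bdd_below A"
    unfolding bdd_above_def bdd_below_def by (meson abs_le_D1 abs_le_D2 minus_le_iff)
qed

text \<open>Under saturation at infinity a small set of positive elements is bounded
  away from zero, since the set of their inverses is bounded.\<close>
lemma small_positive_set_bounded_away:
  fixes S :: "'a::linordered_field set"
  assumes inf: "alg_saturated_at_infinity \<kappa> TYPE('a)" and S: "|S| <o \<kappa>"
    and pos: "\<forall>s\<in>S. 0 < s"
  obtains e where "0 < e" "\<forall>s\<in>S. e \<le> s"
proof -
  have "bdd_above (inverse ` S)"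
    using inf[unfolded alg_saturated_at_infinity_def, rule_format, OF image_card_less[OF S]]
    by (rule conjunct1)
  then obtain M where M: "\<forall>s\<in>S. inverse s \<le> M" unfolding bdd_above_def by blast
  have "inverse (max M 1) \<le> s" if "s \<in> S" for s
  proof -
    have "inverse s \<le> max M 1" using M that by (meson max.coboundedI1)
    then have "inverse (max M 1) \<le> inverse (inverse s)"
      using pos that by (intro le_imp_inverse_le) auto
    then show ?thesis by simp
  qed
  then show ?thesis by (intro that[of "inverse (max M 1)"]) auto
qed

lemma cantor_complete_if_saturated:
  assumes sat: "alg_saturated \<kappa> TYPE('a::linordered_field)"
  shows "cantor_complete \<kappa> TYPE('a)"
  unfolding cantor_complete_def
proof (intro allI impI)
  fix F :: "('a \<times> 'a) set"
  assume small: "|F| <o \<kappa>" and fip: "closed_fip F"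
  show "\<exists>x. \<forall>(a, b)\<in>F. x \<in> {a..b}"
  proof (cases "\<exists>(c, d)\<in>F. \<forall>(a, b)\<in>F. a \<le> c")
    case True
    then obtain c d where "(c, d) \<in> F" "\<forall>(a, b)\<in>F. a \<le> c" by blast
    then have "\<forall>(a, b)\<in>F. c \<in> {a..b}" using closed_fip_pair[OF fip] by fastforce
    then show ?thesis by blast
  next
    case False
    text \<open>No left endpoint is maximal, so the pairwise condition becomes strict.\<close>
    have "a < d" if "(a, b) \<in> F" "(c, d) \<in> F" for a b c d
    proof -
      have "\<exists>(a', b')\<in>F. a < a'" using False that(1) by (fastforce simp: not_le)
      then obtain a' b' where "(a', b') \<in> F" "a < a'" by blast
      then show ?thesis using closed_fip_pair[OF fip _ that(2)] by fastforce
    qed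
    then have "open_fip F" unfolding open_fip_iff_pairwise by blast
    then obtain x where "\<forall>(a, b)\<in>F. x \<in> {a<..<b}"
      using sat small unfolding alg_saturated_def by blast
    then have "\<forall>(a, b)\<in>F. x \<in> {a..b}" by auto
    then show ?thesis by blast
  qed
qed

text \<open>Cantor completeness and saturation at infinity imply saturation: shrink
  every open interval by half of a uniform lower bound e of the gaps d - a.\<close>
lemma saturated_if_cantor_complete:
  assumes nat: "natLeq <o \<kappa>"
    and cantor: "cantor_complete \<kappa> TYPE('a::linordered_field)"
    and inf: "alg_saturated_at_infinity \<kappa> TYPE('a)"
  shows "alg_saturated \<kappa> TYPE('a)"
  unfolding alg_saturated_def
proof (intro allI impI)
  fix F :: "('a \<times> 'a) set"
  assume small: "|F| <o \<kappa>" and fip: "open_fip F"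
  define gaps where "gaps = (\<lambda>((a, b), (c, d)). d - a) ` (F \<times> F)"
  have "|gaps| <o \<kappa>" unfolding gaps_def by (intro image_card_less Times_card_less nat small)
  moreover have "\<forall>g\<in>gaps. 0 < g" unfolding gaps_def using open_fip_pair[OF fip] by force
  ultimately obtain e where e: "0 < e" "\<forall>g\<in>gaps. e \<le> g"
    using small_positive_set_bounded_away[OF inf] by blast
  have gap: "e \<le> d - a" if "(a, b) \<in> F" "(c, d) \<in> F" for a b c d
    using e(2) that unfolding gaps_def by force
  define shrunk where "shrunk = (\<lambda>(a, b). (a + e/2, b - e/2)) ` F"
  have "closed_fip shrunk"
    unfolding closed_fip_iff_pairwise shrunk_def using gap by fastforce
  then obtain x where x: "\<forall>(a, b)\<in>shrunk. x \<in> {a..b}"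
    using cantor image_card_less[OF small] unfolding cantor_complete_def shrunk_def by blast
  have "x \<in> {a<..<b}" if "(a, b) \<in> F" for a b
  proof -
    have "a + e/2 \<le> x" "x \<le> b - e/2" using x that unfolding shrunk_def by force+
    then show ?thesis using e(1) by simp
  qed
  then show "\<exists>x. \<forall>(a, b)\<in>F. x \<in> {a<..<b}" by blast
qed

theorem mainTheorem16:
  fixes \<kappa> :: "'b rel"
  assumes "Card_order \<kappa>" and "(natLeq, \<kappa>) \<in> ordLess"
  shows "alg_saturated \<kappa> TYPE('a::linordered_field) \<longleftrightarrow>
           cantor_complete \<kappa> TYPE('a) \<and> alg_saturated_at_infinity \<kappa> TYPE('a)"
  using cantor_complete_if_saturated alg_saturated_at_infinity
    saturated_if_cantor_complete[OF assms(2)] by blast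

end
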